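(* Let $U\subseteq\mathrm{Homeo}^+(\mathbb{R})$ and let $\mathcal{F}$ be a family such that: (1) $\mathcal{F}$ is a countable set of partial injective functions from $\mathbb{R}$ to $\mathbb{R}$; (2) for every $(x,y)\in\mathbb{R}^2$ there is $\varphi\in U$ with $\varphi(x)=y$ such that for every $z\neq x$ there is some $f\in\mathcal{F}$ (with $z\in\mathrm{dom}(f)$) satisfying $\varphi(z)=f(z)$. Let $\sim$ be the equivalence relation on $\mathbb{R}$ generated by $R:=\{(u,v): \exists f\in\mathcal{F}\ f(u)=v\}$. Then there is no good $U$-anonymous weak $\mathbb{R}/\sim$-predictor.
   Context: $\mathrm{Homeo}^+(\mathbb{R})$ is the group of increasing homeomorphisms of $\mathbb{R}$. For a set $S$, a weak $S$-predictor is a function $\mathcal{P}$ from the set of $S$-valued functions $f$ with domain $\mathbb{R}\setminus\{h_f\}$ for some $h_f\in\mathbb{R}$ into $S$. It is good if for every $F:\mathbb{R}\to S$ the set $\{x:\mathcal{P}(F|_{\mathbb{R}\setminus\{x\}})\neq F(x)\}$ has Lebesgue measure zero. It is $U$-anonymous if whenever $f,g$ are such functions with holes $h_f,h_g$, $\varphi\in U$, $\varphi(h_f)=h_g$, and $f=(g\circ\varphi)|_{\mathbb{R}\setminus\{h_f\}}$, then $\mathcal{P}(f)=\mathcal{P}(g)$. *)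

theory Defs
  imports "HOL-Analysis.Analysis"
begin

definition Homeo_plus :: "(real \<Rightarrow> real) set" where
  "Homeo_plus = {\<phi>. (\<exists>\<psi>. homeomorphism UNIV UNIV \<phi> \<psi>) \<and> mono \<phi>}"

definition holed_fun :: "'a set \<Rightarrow> real \<Rightarrow> (real \<Rightarrow> 'a option) \<Rightarrow> bool" where
  "holed_fun S h f \<longleftrightarrow> dom f = UNIV - {h} \<and> ran f \<subseteq> S"

definition weak_predictor :: "'a set \<Rightarrow> ((real \<Rightarrow> 'a option) \<Rightarrow> 'a) \<Rightarrow> bool" where
  "weak_predictor S P \<longleftrightarrow> (\<forall>f h. holed_fun S h f \<longrightarrow> P f \<in> S)"

definition restrict_hole :: "(real \<Rightarrow> 'a) \<Rightarrow> real \<Rightarrow> (real \<Rightarrow> 'a option)" where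
  "restrict_hole F x = (\<lambda>z. if z = x then None else Some (F z))"

definition good_predictor :: "'a set \<Rightarrow> ((real \<Rightarrow> 'a option) \<Rightarrow> 'a) \<Rightarrow> bool" where
  "good_predictor S P \<longleftrightarrow>
     (\<forall>F. (\<forall>x. F x \<in> S) \<longrightarrow>
        {x. P (restrict_hole F x) \<noteq> F x} \<in> null_sets lebesgue)"

definition anonymous_predictor ::
    "(real \<Rightarrow> real) set \<Rightarrow> 'a set \<Rightarrow> ((real \<Rightarrow> 'a option) \<Rightarrow> 'a) \<Rightarrow> bool" where
  "anonymous_predictor U S P \<longleftrightarrow>
     (\<forall>f g hf hg \<phi>. holed_fun S hf f \<longrightarrow> holed_fun S hg g \<longrightarrow> \<phi> \<in> U \<longrightarrow>
        \<phi> hf = hg \<longrightarrow> (\<forall>z. z \<noteq> hf \<longrightarrow> f z = g (\<phi> z)) \<longrightarrow> P f = P g)"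

definition equiv_gen :: "(real \<times> real) set \<Rightarrow> (real \<times> real) set" where
  "equiv_gen R = (R \<union> R\<inverse>)\<^sup>*"

end

theory Submission
  imports Defs
begin

text \<open>Let \<open>q\<close> send each real to its \<open>\<sim>\<close>-class. Every \<open>\<phi> \<in> U\<close> moving \<open>x\<close> to \<open>y\<close> acts on
  \<open>\<real> - {x}\<close> through members of \<open>\<F>\<close>, so it preserves \<open>q\<close> there; by anonymity the prediction
  for \<open>q\<close> with hole \<open>x\<close> equals the one with hole \<open>y\<close>, hence is a single class \<open>c\<close>. A good
  predictor is then right almost everywhere, i.e. almost every real lies in \<open>c\<close>. But \<open>c\<close> is
  countable, being the orbit of a point under countably many partial injections, hence null.\<close>

lemma countable_Image_partial_maps:
  fixes \<F> :: "('a \<Rightarrow> 'b option) set"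
  assumes "countable \<F>"
  shows "countable ({(u, v). \<exists>f\<in>\<F>. f u = Some v} `` {u})"
proof (rule countable_subset)
  show "{(u, v). \<exists>f\<in>\<F>. f u = Some v} `` {u} \<subseteq> (\<Union>f\<in>\<F>. set_option (f u))"
    by force
  show "countable (\<Union>f\<in>\<F>. set_option (f u))"
    using assms by (intro countable_UN) auto
qed

lemma countable_converse_Image_partial_injections:
  fixes \<F> :: "('a \<Rightarrow> 'b option) set"
  assumes "countable \<F>" and "\<forall>f\<in>\<F>. inj_on f (dom f)"
  shows "countable ({(u, v). \<exists>f\<in>\<F>. f u = Some v}\<inverse> `` {v})"
proof (rule countable_subset)
  show "{(u, v). \<exists>f\<in>\<F>. f u = Some v}\<inverse> `` {v} \<subseteq> (\<Union>f\<in>\<F>. f -` {Some v} \<inter> dom f)"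
    by auto
  show "countable (\<Union>f\<in>\<F>. f -` {Some v} \<inter> dom f)"
    using assms by (intro countable_UN) (auto intro!: countable_finite finite_vimage_IntI)
qed

lemma countable_equiv_class_partial_injections:
  fixes \<F> :: "('a \<Rightarrow> 'a option) set"
  assumes "countable \<F>" and "\<forall>f\<in>\<F>. inj_on f (dom f)"
  defines "R \<equiv> {(u, v). \<exists>f\<in>\<F>. f u = Some v}"
  shows "countable ((R \<union> R\<inverse>)\<^sup>* `` {x})"
proof (rule countable_rtrancl)
  fix Y :: "'a set"
  assume "countable Y"
  have "(R \<union> R\<inverse>) `` Y = (\<Union>u\<in>Y. R `` {u} \<union> R\<inverse> `` {u})"
    by auto
  then show "countable ((R \<union> R\<inverse>) `` Y)"
    using \<open>countable Y\<close> countable_Image_partial_maps[OF assms(1)]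
      countable_converse_Image_partial_injections[OF assms(1,2)]
    unfolding R_def by simp
qed simp

lemma equiv_equiv_gen: "equiv UNIV (equiv_gen R)"
  unfolding equiv_gen_def
  by (intro equivI refl_rtrancl sym_rtrancl sym_Un_converse trans_rtrancl) simp

lemma equiv_gen_Image_eq: "(u, v) \<in> R \<Longrightarrow> equiv_gen R `` {u} = equiv_gen R `` {v}"
  by (rule equiv_class_eq[OF equiv_equiv_gen]) (auto simp: equiv_gen_def)

lemma countable_fibres_class_map:
  assumes "equiv UNIV E" and "\<And>x. countable (E `` {x})"
  shows "countable ((\<lambda>x. E `` {x}) -` {c})"
proof (cases "c \<in> range (\<lambda>x. E `` {x})")
  case True
  then obtain x where "c = E `` {x}"
    by blast
  have "(\<lambda>y. E `` {y}) -` {E `` {x}} \<subseteq> E `` {x}"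
    using equiv_class_self[OF assms(1)] by auto
  then have "countable ((\<lambda>y. E `` {y}) -` {E `` {x}})"
    using assms(2) by (rule countable_subset)
  with \<open>c = E `` {x}\<close> show ?thesis
    by simp
next
  case False
  then have "(\<lambda>x. E `` {x}) -` {c} = {}"
    by blast
  then show ?thesis
    by simp
qed

lemma Homeo_plus_imp_inj:
  assumes "\<phi> \<in> Homeo_plus"
  shows "inj \<phi>"
proof -
  obtain \<psi> where "homeomorphism UNIV UNIV \<phi> \<psi>"
    using assms unfolding Homeo_plus_def by blast
  then have "\<psi> (\<phi> x) = x" for x
    by (rule homeomorphism_apply1) simp
  then show ?thesis
    by (rule inj_on_inverseI)
qed

lemma holed_fun_restrict_hole: "(\<And>z. F z \<in> S) \<Longrightarrow> holed_fun S x (restrict_hole F x)"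
  unfolding holed_fun_def restrict_hole_def by (auto simp: dom_def ran_def split: if_splits)

lemma anonymous_predictor_restrict_hole_eq:
  assumes "anonymous_predictor U S P" and "\<And>z. F z \<in> S"
    and "\<phi> \<in> U" and "inj \<phi>" and "\<And>z. z \<noteq> x \<Longrightarrow> F (\<phi> z) = F z"
  shows "P (restrict_hole F x) = P (restrict_hole F (\<phi> x))"
proof (rule assms(1)[unfolded anonymous_predictor_def, rule_format])
  show "holed_fun S x (restrict_hole F x)" "holed_fun S (\<phi> x) (restrict_hole F (\<phi> x))"
    using assms(2) by (simp_all add: holed_fun_restrict_hole)
  fix z
  assume "z \<noteq> x"
  then have "\<phi> z \<noteq> \<phi> x"
    using \<open>inj \<phi>\<close> by (meson injD)
  with \<open>z \<noteq> x\<close> show "restrict_hole F x z = restrict_hole F (\<phi> x) (\<phi> z)"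
    using assms(5) by (simp add: restrict_hole_def)
qed (use assms(3) in simp_all)

lemma not_good_predictor_if_constant_prediction:
  assumes "\<And>x. F x \<in> S" and "\<And>c. countable (F -` {c})"
    and "\<And>x y. P (restrict_hole F x) = P (restrict_hole F y)"
  shows "\<not> good_predictor S P"
proof
  assume "good_predictor S P"
  define c where "c = P (restrict_hole F 0)"
  have "{x. P (restrict_hole F x) \<noteq> F x} \<in> null_sets lebesgue"
    using \<open>good_predictor S P\<close> assms(1) unfolding good_predictor_def by blast
  moreover have "P (restrict_hole F x) = c" for x
    unfolding c_def by (rule assms(3))
  ultimately have wrong: "-(F -` {c}) \<in> null_sets lebesgue"
    by (simp add: Compl_eq vimage_def eq_commute)
  have right: "F -` {c} \<in> null_sets lebesgue"
    using assms(2) by (intro null_sets_completionI countable_imp_null_set_lborel)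
  have "emeasure lebesgue (UNIV :: real set) = \<infinity>"
    by simp
  then show False
    using null_sets.Un[OF wrong right] by (simp add: null_sets_def)
qed

theorem corollary5p3:
  fixes U :: "(real \<Rightarrow> real) set"
    and \<F> :: "(real \<Rightarrow> real option) set"
  assumes "U \<subseteq> Homeo_plus"
    and "countable \<F>"
    and "\<forall>f\<in>\<F>. inj_on f (dom f)"
    and "\<forall>x y. \<exists>\<phi>\<in>U. \<phi> x = y \<and> (\<forall>z. z \<noteq> x \<longrightarrow> (\<exists>f\<in>\<F>. f z = Some (\<phi> z)))"
  shows "\<not> (\<exists>P. weak_predictor (UNIV // equiv_gen {(u, v). \<exists>f\<in>\<F>. f u = Some v}) P
              \<and> good_predictor (UNIV // equiv_gen {(u, v). \<exists>f\<in>\<F>. f u = Some v}) P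
              \<and> anonymous_predictor U (UNIV // equiv_gen {(u, v). \<exists>f\<in>\<F>. f u = Some v}) P)"
proof clarify
  let ?E = "equiv_gen {(u, v). \<exists>f\<in>\<F>. f u = Some v}"
  define q where "q = (\<lambda>x. ?E `` {x})"
  fix P
  assume good: "good_predictor (UNIV // ?E) P" and anon: "anonymous_predictor U (UNIV // ?E) P"
  have q_class: "q x \<in> UNIV // ?E" for x
    unfolding q_def by (simp add: quotientI)
  have countable_fibres: "countable (q -` {c})" for c
    unfolding q_def using equiv_equiv_gen
  proof (rule countable_fibres_class_map)
    show "countable (?E `` {x})" for x
      unfolding equiv_gen_def by (rule countable_equiv_class_partial_injections[OF assms(2,3)])
  qed
  have "P (restrict_hole q x) = P (restrict_hole q y)" for x y
  proof -
    obtain \<phi> where "\<phi> \<in> U" "\<phi> x = y"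
      and \<phi>_by_\<F>: "\<forall>z. z \<noteq> x \<longrightarrow> (\<exists>f\<in>\<F>. f z = Some (\<phi> z))"
      using assms(4) by blast
    have "P (restrict_hole q x) = P (restrict_hole q (\<phi> x))"
    proof (rule anonymous_predictor_restrict_hole_eq[OF anon q_class \<open>\<phi> \<in> U\<close>])
      show "inj \<phi>"
        using \<open>\<phi> \<in> U\<close> assms(1) Homeo_plus_imp_inj by blast
      fix z
      assume "z \<noteq> x"
      then obtain f where "f \<in> \<F>" "f z = Some (\<phi> z)"
        using \<phi>_by_\<F> by blast
      then show "q (\<phi> z) = q z"
        unfolding q_def by (intro equiv_gen_Image_eq[symmetric]) blast
    qed
    with \<open>\<phi> x = y\<close> show ?thesis
      by simp
  qed
  then have "\<not> good_predictor (UNIV // ?E) P"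
    by (rule not_good_predictor_if_constant_prediction[OF q_class countable_fibres])
  with good show False
    by contradiction
qed

end
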